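(* Let $G$ be a group and $\kappa$ an infinite cardinal with $\kappa<|G|$. Then the ballean $(G,\mathcal E_{[G]^{<\kappa}})$ is not normal.
   Context: A ballean is a pair $(X,\mathcal E_X)$ where $X$ is a set and $\mathcal E_X$ is a family of subsets of $X\times X$ (entourages) such that: each $E\in\mathcal E_X$ contains the diagonal; for any $E,F\in\mathcal E_X$ there is $D\in\mathcal E_X$ with $E\circ F^{-1}\subset D$; and $\bigcup\mathcal E_X=X\times X$. For $E\in\mathcal E_X$, $x\in X$, $A\subset X$: $E[x]=\{y:(x,y)\in E\}$, $E[A]=\bigcup_{a\in A}E[a]$. $B\subset X$ is bounded if $B\subset E[x]$ for some $E\in\mathcal E_X$, $x\in X$; $\mathcal B_X$ is the family of bounded sets. Sets $A,B$ are asymptotically disjoint if $E[A]\cap E[B]\in\mathcal B_X$ for all $E\in\mathcal E_X$; $U$ is an asymptotic neighborhood of $A$ if $E[A]\setminus U\in\mathcal B_X$ for all $E$; $X$ is normal if any two asymptotically disjoint sets have disjoint asymptotic neighborhoods. For a group $G$ and infinite cardinal $\kappa\le|G|$, $[G]^{<\kappa}$ is the family of subsets of $G$ of cardinality $<\kappa$, and $\mathcal E_{[G]^{<\kappa}}$ is the ball structure on $G$ consisting of the entourages $E_I=\{(x,y)\in G\times G:y\in\{x\}\cup Ix\}$, $I\in[G]^{<\kappa}$. *)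

theory Defs
  imports "HOL-Algebra.Group"
begin

definition ballean :: "'a set \<Rightarrow> ('a \<times> 'a) set set \<Rightarrow> bool" where
  "ballean X Ent \<longleftrightarrow>
     (\<forall>E\<in>Ent. E \<subseteq> X \<times> X \<and> Id_on X \<subseteq> E) \<and>
     (\<forall>E\<in>Ent. \<forall>F\<in>Ent. \<exists>D\<in>Ent. E O F\<inverse> \<subseteq> D) \<and>
     \<Union>Ent = X \<times> X"

definition bounded_in :: "'a set \<Rightarrow> ('a \<times> 'a) set set \<Rightarrow> 'a set \<Rightarrow> bool" where
  "bounded_in X Ent B \<longleftrightarrow> (\<exists>E\<in>Ent. \<exists>x\<in>X. B \<subseteq> E `` {x})"

definition asymp_disjoint :: "'a set \<Rightarrow> ('a \<times> 'a) set set \<Rightarrow> 'a set \<Rightarrow> 'a set \<Rightarrow> bool" where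
  "asymp_disjoint X Ent A B \<longleftrightarrow> (\<forall>E\<in>Ent. bounded_in X Ent (E `` A \<inter> E `` B))"

definition asymp_nbhd :: "'a set \<Rightarrow> ('a \<times> 'a) set set \<Rightarrow> 'a set \<Rightarrow> 'a set \<Rightarrow> bool" where
  "asymp_nbhd X Ent U A \<longleftrightarrow> (\<forall>E\<in>Ent. bounded_in X Ent (E `` A - U))"

definition normal_ballean :: "'a set \<Rightarrow> ('a \<times> 'a) set set \<Rightarrow> bool" where
  "normal_ballean X Ent \<longleftrightarrow>
     (\<forall>A B. A \<subseteq> X \<longrightarrow> B \<subseteq> X \<longrightarrow> asymp_disjoint X Ent A B \<longrightarrow>
        (\<exists>U V. U \<subseteq> X \<and> V \<subseteq> X \<and> U \<inter> V = {} \<and>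
               asymp_nbhd X Ent U A \<and> asymp_nbhd X Ent V B))"

definition entourage_I :: "('a, 'b) monoid_scheme \<Rightarrow> 'a set \<Rightarrow> ('a \<times> 'a) set" where
  "entourage_I G I = {(x, y). x \<in> carrier G \<and> y \<in> carrier G \<and>
                        (y = x \<or> (\<exists>i\<in>I. y = i \<otimes>\<^bsub>G\<^esub> x))}"

text \<open>The ball structure E_{[G]^{<\<kappa>}}, where the cardinal \<kappa> is given as
  the cardinality of a set K: I ranges over subsets of G with |I| < |K|.\<close>

definition small_ent :: "('a, 'b) monoid_scheme \<Rightarrow> 'k set \<Rightarrow> ('a \<times> 'a) set set" where
  "small_ent G K = {entourage_I G I | I. I \<subseteq> carrier G \<and> (card_of I, card_of K) \<in> ordLess}"

end

(* Fix a subgroup H with |H| = kappa and a set B of representatives of distinct left cosets of H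
   such that every left coset gH meets HB in at least kappa points.  H and B are asymptotically
   disjoint: for |I| < kappa and i, j in {1} \<union> I, the set iH \<inter> jB has at most one point.
   Suppose U and V were disjoint asymptotic neighbourhoods of H and B.  Then every gH lies in U up
   to fewer than kappa points and every hB (h in H) lies in V up to fewer than kappa points.  Hence
   W = \<Union>{hB - V | h in H} has at most kappa points, and W meets every gH, because some point of
   gH \<inter> HB lies in U and therefore not in V.  So G = WH has at most kappa points, a contradiction. *)

theory Submission
  imports Defs "HOL-Algebra.Coset"
begin

unbundle cardinal_syntax

lemma finite_ordLess_infinite_card_of:
  assumes "finite A" and "infinite C"
  shows "|A| <o |C|"
  using assms finite_ordLess_infinite[of "|A|" "|C|"] card_of_Well_order Field_card_of by metis

lemma card_of_Times_ordLeq_infinite: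
  assumes "infinite C" and "|A| \<le>o |C|" and "|B| \<le>o |C|"
  shows "|A \<times> B| \<le>o |C|"
  using assms
  by (intro card_of_Times_ordLeq_infinite_Field) (auto simp: Field_card_of card_of_card_order_on)

lemma card_of_Un_ordLeq_infinite:
  assumes "infinite C" and "|A| \<le>o |C|" and "|B| \<le>o |C|"
  shows "|A \<union> B| \<le>o |C|"
  using assms
  by (intro card_of_Un_ordLeq_infinite_Field) (auto simp: Field_card_of card_of_card_order_on)

lemma card_of_Times_ordLess_infinite:
  fixes A B :: "'a set"
  assumes "infinite C" and "|A| <o |C|" and "|B| <o |C|"
  shows "|A \<times> B| <o |C|"
proof (cases "finite (A \<union> B)")
  case True
  then show ?thesis using assms(1) by (simp add: finite_ordLess_infinite_card_of)
next
  case False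
  have "|A \<times> B| \<le>o |(A \<union> B) \<times> (A \<union> B)|" by (rule card_of_mono1) auto
  also have "|(A \<union> B) \<times> (A \<union> B)| =o |A \<union> B|" using False by (rule card_of_Times_same_infinite)
  also have "|A \<union> B| <o |C|" using assms by (rule card_of_Un_ordLess_infinite)
  finally show ?thesis .
qed

lemma exists_subset_inj_on_same_image: "\<exists>B \<subseteq> A. inj_on f B \<and> f ` B = f ` A"
proof (intro exI conjI)
  let ?B = "inv_into A f ` f ` A"
  show "?B \<subseteq> A" by (auto intro: inv_into_into)
  show "inj_on f ?B" by (rule inj_onI) (auto simp: f_inv_into_f)
  show "f ` ?B = f ` A" by (simp add: image_image f_inv_into_f cong: image_cong)
qed

context group
begin

lemma set_mult_eq_image: "A <#> B = (\<lambda>(a, b). a \<otimes> b) ` (A \<times> B)"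
  unfolding set_mult_def by auto

lemma card_of_set_mult_ordLeq: "|A <#> B| \<le>o |A \<times> B|"
  unfolding set_mult_eq_image by (rule card_of_image)

lemma mem_l_coset_iff:
  assumes "subgroup H G" and "x \<in> carrier G" and "y \<in> carrier G"
  shows "y \<in> x <# H \<longleftrightarrow> inv x \<otimes> y \<in> H"
proof
  assume "y \<in> x <# H"
  then obtain h where "h \<in> H" and "y = x \<otimes> h" unfolding l_coset_def by blast
  then show "inv x \<otimes> y \<in> H"
    using assms subgroup.mem_carrier by (fastforce simp: m_assoc[symmetric])
next
  assume "inv x \<otimes> y \<in> H"
  then show "y \<in> x <# H" using assms by (intro subgroup.lcos_module_rev) (auto intro: is_group)
qed

lemma l_coset_eq_iff:
  assumes "subgroup H G" and "x \<in> carrier G" and "y \<in> carrier G"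
  shows "x <# H = y <# H \<longleftrightarrow> inv x \<otimes> y \<in> H"
proof
  assume "x <# H = y <# H"
  moreover have "y \<in> y <# H" using assms by (simp add: mem_l_coset_iff subgroup.one_closed)
  ultimately show "inv x \<otimes> y \<in> H" using assms mem_l_coset_iff by blast
next
  assume "inv x \<otimes> y \<in> H"
  then show "x <# H = y <# H" using assms l_repr_independence mem_l_coset_iff by blast
qed

lemma l_coset_mult_mem:
  assumes "subgroup H G" and "x \<in> carrier G" and "h \<in> H"
  shows "(x \<otimes> h) <# H = x <# H"
proof -
  have "inv x \<otimes> (x \<otimes> h) = h"
    using assms subgroup.mem_carrier by (fastforce simp: m_assoc[symmetric])
  then show ?thesis using assms subgroup.mem_carrier l_coset_eq_iff[of H x "x \<otimes> h"] by fastforce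
qed

lemma subgroup_if_div_closed:
  assumes "H \<subseteq> carrier G" and "\<one> \<in> H" and "\<And>a b. a \<in> H \<Longrightarrow> b \<in> H \<Longrightarrow> a \<otimes> inv b \<in> H"
  shows "subgroup H G"
proof (rule subgroupI)
  show "H \<subseteq> carrier G" and "H \<noteq> {}" using assms(1,2) by auto
  show inv: "inv a \<in> H" if "a \<in> H" for a
    using assms(3)[OF assms(2) that] assms(1) that by auto
  show "a \<otimes> b \<in> H" if "a \<in> H" and "b \<in> H" for a b
    using assms(3)[OF that(1) inv[OF that(2)]] assms(1) that by auto
qed

lemma subgroup_UN_chain:
  assumes "\<And>n. S n \<subseteq> carrier G" and "\<one> \<in> S 0" and "\<And>n. S n \<subseteq> S (Suc n)"
    and "\<And>n a b. a \<in> S n \<Longrightarrow> b \<in> S n \<Longrightarrow> a \<otimes> inv b \<in> S (Suc n)"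
  shows "subgroup (\<Union>n. S n) G"
proof (rule subgroup_if_div_closed)
  show "(\<Union>n. S n) \<subseteq> carrier G" and "\<one> \<in> (\<Union>n. S n)" using assms(1,2) by auto
  have mono: "m \<le> n \<Longrightarrow> S m \<subseteq> S n" for m n
    using lift_Suc_mono_le[of S, OF assms(3)] .
  fix a b assume "a \<in> (\<Union>n. S n)" and "b \<in> (\<Union>n. S n)"
  then obtain m n where "a \<in> S m" and "b \<in> S n" by blast
  then have "a \<in> S (max m n)" and "b \<in> S (max m n)"
    using mono by (meson max.cobounded1 max.cobounded2 subsetD)+
  then show "a \<otimes> inv b \<in> (\<Union>n. S n)" using assms(4) by blast
qed

lemma exists_subgroup_card_of_ordLeq:
  assumes "infinite X" and "X \<subseteq> carrier G"
  shows "\<exists>H. subgroup H G \<and> X \<subseteq> H \<and> |H| \<le>o |X|"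
proof (intro exI conjI)
  define step where "step Y = Y \<union> (\<lambda>(a, b). a \<otimes> inv b) ` (Y \<times> Y)" for Y
  define S where "S n = (step ^^ n) (insert \<one> X)" for n
  have S_Suc: "S (Suc n) = step (S n)" for n by (simp add: S_def)
  have S_carrier: "S n \<subseteq> carrier G" for n
    by (induction n) (auto simp: S_def step_def assms(2))
  show "subgroup (\<Union>n. S n) G"
    using S_carrier
  proof (rule subgroup_UN_chain)
    show "\<one> \<in> S 0" and "S n \<subseteq> S (Suc n)" for n by (auto simp: S_def step_def)
    show "a \<otimes> inv b \<in> S (Suc n)" if "a \<in> S n" and "b \<in> S n" for n a b
      unfolding S_Suc step_def using that by (intro UnI2 rev_image_eqI[of "(a, b)"]) auto
  qed
  show "X \<subseteq> (\<Union>n. S n)" using S_def[of 0] by auto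
  have "|S n| \<le>o |X|" for n
  proof (induction n)
    case 0
    have "|{\<one>}| \<le>o |X|" using assms(1) by (intro card_of_singl_ordLeq) auto
    then have "|{\<one>} \<union> X| \<le>o |X|" using assms(1) ordLeq_refl card_of_Card_order
      by (intro card_of_Un_ordLeq_infinite) auto
    then show ?case by (simp add: S_def)
  next
    case (Suc n)
    have "|(\<lambda>(a, b). a \<otimes> inv b) ` (S n \<times> S n)| \<le>o |S n \<times> S n|" by (rule card_of_image)
    also have "|S n \<times> S n| \<le>o |X|" using assms(1) Suc by (intro card_of_Times_ordLeq_infinite)
    finally show ?case unfolding S_Suc step_def using assms(1) Suc by (intro card_of_Un_ordLeq_infinite)
  qed
  then show "|\<Union>n. S n| \<le>o |X|"
    using assms(1) infinite_iff_card_of_nat by (intro card_of_UNION_ordLeq_infinite) auto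
qed

lemma inv_mult_cancel_left:
  assumes "x \<in> carrier G" and "y \<in> carrier G" and "z \<in> carrier G"
  shows "inv (x \<otimes> y) \<otimes> (x \<otimes> z) = inv y \<otimes> z"
  using assms by (simp add: inv_mult_group m_assoc) (simp add: m_assoc[symmetric])

definition double_coset :: "'a set \<Rightarrow> 'a \<Rightarrow> 'a set"
  where "double_coset H x = H <#> (x <# H)"

lemma mem_double_coset_self:
  assumes "subgroup H G" and "x \<in> carrier G"
  shows "x \<in> double_coset H x"
proof -
  have "x = \<one> \<otimes> (x \<otimes> \<one>)" using assms(2) by simp
  then show ?thesis
    using subgroup.one_closed[OF assms(1)] unfolding double_coset_def set_mult_def l_coset_def by blast
qed

lemma double_coset_eq_set_mult_l_coset:
  assumes "subgroup H G" and "h \<in> H" and "x \<in> carrier G"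
  shows "double_coset H x = H <#> ((h \<otimes> x) <# H)"
proof -
  have H: "H \<subseteq> carrier G" and h: "h \<in> carrier G"
    using assms subgroup.subset by auto
  have "H <#> ((h \<otimes> x) <# H) = H <#> (h <# (x <# H))"
    using H h assms(3) by (simp add: lcos_m_assoc)
  also have "\<dots> = (H #> h) <#> (x <# H)"
    using H h assms(3) by (simp add: rcos_assoc_lcos l_coset_subset_G)
  also have "\<dots> = double_coset H x"
    using assms by (simp add: subgroup.rcos_const is_group double_coset_def)
  finally show ?thesis ..
qed

lemma double_coset_eq_if_l_coset_eq:
  assumes "subgroup H G" and "h \<in> H" and "h' \<in> H" and "x \<in> carrier G" and "y \<in> carrier G"
    and "(h \<otimes> x) <# H = (h' \<otimes> y) <# H"
  shows "double_coset H x = double_coset H y"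
  using assms double_coset_eq_set_mult_l_coset by metis

lemma l_coset_if_mem_double_coset:
  assumes "subgroup H G" and "x \<in> carrier G" and "g \<in> double_coset H x"
  shows "\<exists>h\<in>H. g <# H = (h \<otimes> x) <# H"
proof -
  obtain h k where "h \<in> H" and "k \<in> H" and g: "g = h \<otimes> (x \<otimes> k)"
    using assms(3) unfolding double_coset_def set_mult_def l_coset_def by blast
  have "h \<in> carrier G" and "k \<in> carrier G"
    using \<open>h \<in> H\<close> \<open>k \<in> H\<close> assms(1) by (auto intro: subgroup.mem_carrier)
  then have "g <# H = (h \<otimes> x) <# H"
    using assms(1,2) \<open>k \<in> H\<close> l_coset_mult_mem[of H "h \<otimes> x" k] g by (simp add: m_assoc)
  then show ?thesis using \<open>h \<in> H\<close> by blast
qed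

definition spreading_transversal :: "'a set \<Rightarrow> 'k set \<Rightarrow> 'a set \<Rightarrow> bool"
  where "spreading_transversal H K B \<longleftrightarrow> B \<subseteq> carrier G \<and> inj_on (\<lambda>b. b <# H) B \<and>
           (\<forall>g \<in> carrier G. |K| \<le>o |(g <# H) \<inter> (H <#> B)| )"

end

locale coset_representatives = subgroup + group +
  fixes S :: "'a set" and C :: "'a \<Rightarrow> 'a set"
  assumes S_subset: "S \<subseteq> carrier G"
    and inj_on_double_coset: "inj_on (double_coset H) S"
    and double_coset_image: "double_coset H ` S = double_coset H ` carrier G"
    and C_subset: "s \<in> S \<Longrightarrow> C s \<subseteq> H"
    and inj_on_l_coset_C: "s \<in> S \<Longrightarrow> inj_on (\<lambda>c. (c \<otimes> s) <# H) (C s)"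
    and l_coset_image_C: "s \<in> S \<Longrightarrow> (\<lambda>c. (c \<otimes> s) <# H) ` C s = (\<lambda>h. (h \<otimes> s) <# H) ` H"
begin

(* S picks one point in each double coset HsH, and C s one c in H for each left coset csH inside
   HsH.  That coset is represented by csc rather than by cs: then hsc = (hc^-1)(csc) lies in
   H <#> transversal for every h in H, so every left coset gH = h0 s H meets H <#> transversal in
   the |C s| points h0 s c and the |coset_stabilizer s| points h0 t s c1, while
   H = C s <#> coset_stabilizer s. *)

definition transversal :: "'a set"
  where "transversal = (\<Union>s\<in>S. (\<lambda>c. c \<otimes> s \<otimes> c) ` C s)"

definition coset_stabilizer :: "'a \<Rightarrow> 'a set"
  where "coset_stabilizer s = {t \<in> H. inv s \<otimes> t \<otimes> s \<in> H}"

lemma C_carrier: "s \<in> S \<Longrightarrow> c \<in> C s \<Longrightarrow> c \<in> carrier G"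
  using C_subset mem_carrier by blast

lemma transversal_subset: "transversal \<subseteq> carrier G"
  using S_subset C_carrier by (auto simp: transversal_def)

lemma inj_on_l_coset_transversal: "inj_on (\<lambda>b. b <# H) transversal"
proof (rule inj_onI)
  fix b b' assume "b \<in> transversal" and "b' \<in> transversal" and eq: "b <# H = b' <# H"
  then obtain s c s' c' where s: "s \<in> S" "c \<in> C s" "b = c \<otimes> s \<otimes> c"
    and s': "s' \<in> S" "c' \<in> C s'" "b' = c' \<otimes> s' \<otimes> c'"
    unfolding transversal_def by blast
  have carrier: "s \<in> carrier G" "c \<in> carrier G" "s' \<in> carrier G" "c' \<in> carrier G"
    using s s' S_subset C_carrier by auto
  have "(c \<otimes> s) <# H = (c' \<otimes> s') <# H"
    using eq s s' carrier C_subset l_coset_mult_mem[OF subgroup_axioms] by (metis m_closed subsetD)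
  then have "double_coset H s = double_coset H s'"
    using s s' carrier C_subset by (intro double_coset_eq_if_l_coset_eq[OF subgroup_axioms]) auto
  then have "s = s'" using inj_on_double_coset s s' by (auto dest: inj_onD)
  with \<open>(c \<otimes> s) <# H = (c' \<otimes> s') <# H\<close> have "c = c'"
    using inj_on_l_coset_C s s' by (auto dest: inj_onD)
  then show "b = b'" using s s' \<open>s = s'\<close> by simp
qed

lemma mult_mem_set_mult_transversal:
  assumes "s \<in> S" and "c \<in> C s" and "h \<in> H"
  shows "h \<otimes> s \<otimes> c \<in> H <#> transversal"
proof -
  have carrier: "s \<in> carrier G" "c \<in> carrier G" "h \<in> carrier G"
    using assms S_subset C_carrier by auto
  have "h \<otimes> s \<otimes> c = (h \<otimes> inv c) \<otimes> (c \<otimes> s \<otimes> c)"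
    using carrier by (simp add: m_assoc[symmetric]) (simp add: m_assoc)
  moreover have "h \<otimes> inv c \<in> H" and "c \<otimes> s \<otimes> c \<in> transversal"
    using assms C_subset by (auto simp: transversal_def)
  ultimately show ?thesis unfolding set_mult_def by blast
qed

lemma mult_coset_stabilizer_mem_l_coset:
  assumes "s \<in> carrier G" and "t \<in> coset_stabilizer s" and "c \<in> H" and "h \<in> carrier G"
  shows "h \<otimes> t \<otimes> s \<otimes> c \<in> (h \<otimes> s) <# H"
proof -
  have "t \<in> carrier G" and "c \<in> carrier G" using assms by (auto simp: coset_stabilizer_def)
  then have "inv (h \<otimes> s) \<otimes> (h \<otimes> t \<otimes> s \<otimes> c) = (inv s \<otimes> t \<otimes> s) \<otimes> c"
    using assms inv_mult_cancel_left by (simp add: m_assoc)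
  moreover have "inv s \<otimes> t \<otimes> s \<in> H" using assms(2) by (simp add: coset_stabilizer_def)
  ultimately show ?thesis
    using assms \<open>t \<in> carrier G\<close> \<open>c \<in> carrier G\<close>
    by (simp add: mem_l_coset_iff[OF subgroup_axioms])
qed

lemma subgroup_subset_set_mult_coset_stabilizer:
  assumes "s \<in> S"
  shows "H \<subseteq> C s <#> coset_stabilizer s"
proof
  fix h assume "h \<in> H"
  then obtain c where c: "c \<in> C s" and "(c \<otimes> s) <# H = (h \<otimes> s) <# H"
    using l_coset_image_C[OF assms] by (metis (no_types, lifting) imageE imageI)
  moreover have carrier: "s \<in> carrier G" "c \<in> carrier G" "h \<in> carrier G"
    using assms c \<open>h \<in> H\<close> S_subset C_carrier by auto
  ultimately have "inv (c \<otimes> s) \<otimes> (h \<otimes> s) \<in> H"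
    by (simp add: l_coset_eq_iff[OF subgroup_axioms])
  moreover have "inv (c \<otimes> s) \<otimes> (h \<otimes> s) = inv s \<otimes> (inv c \<otimes> h) \<otimes> s"
    using carrier by (simp add: inv_mult_group m_assoc)
  ultimately have "inv c \<otimes> h \<in> coset_stabilizer s"
    using c \<open>h \<in> H\<close> C_subset[OF assms] by (auto simp: coset_stabilizer_def)
  moreover have "h = c \<otimes> (inv c \<otimes> h)"
    using carrier by (simp add: m_assoc[symmetric])
  ultimately show "h \<in> C s <#> coset_stabilizer s" using c unfolding set_mult_def by blast
qed

lemma card_of_subgroup_ordLeq_Times_l_coset_Int:
  assumes s: "s \<in> S" and h0: "h0 \<in> H"
  defines "D \<equiv> ((h0 \<otimes> s) <# H) \<inter> (H <#> transversal)"
  shows "|H| \<le>o |D \<times> D|"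
proof -
  have "(\<one> \<otimes> s) <# H \<in> (\<lambda>c. (c \<otimes> s) <# H) ` C s"
    unfolding l_coset_image_C[OF s] using subgroup.one_closed[OF subgroup_axioms] by (rule imageI)
  then obtain c1 where c1: "c1 \<in> C s" by blast
  have carrier: "s \<in> carrier G" "h0 \<in> carrier G" using s h0 S_subset by auto
  define pair where "pair = (\<lambda>(c, t). (h0 \<otimes> s \<otimes> c, h0 \<otimes> t \<otimes> s \<otimes> c1))"
  have "pair (c, t) \<in> D \<times> D" if c: "c \<in> C s" and t: "t \<in> coset_stabilizer s" for c t
  proof -
    have "t \<in> H" and "c \<in> H" using c t C_subset[OF s] by (auto simp: coset_stabilizer_def)
    have "\<one> \<in> coset_stabilizer s" using carrier by (simp add: coset_stabilizer_def)
    then have "h0 \<otimes> \<one> \<otimes> s \<otimes> c \<in> (h0 \<otimes> s) <# H"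
      using carrier \<open>c \<in> H\<close> by (intro mult_coset_stabilizer_mem_l_coset)
    moreover have "h0 \<otimes> t \<otimes> s \<otimes> c1 \<in> (h0 \<otimes> s) <# H"
      using carrier t c1 C_subset[OF s] by (intro mult_coset_stabilizer_mem_l_coset) auto
    moreover have "h0 \<otimes> s \<otimes> c \<in> H <#> transversal" and "h0 \<otimes> t \<otimes> s \<otimes> c1 \<in> H <#> transversal"
      using s c c1 h0 \<open>t \<in> H\<close> by (auto intro: mult_mem_set_mult_transversal)
    ultimately show ?thesis using carrier by (simp add: pair_def D_def)
  qed
  then have "pair ` (C s \<times> coset_stabilizer s) \<subseteq> D \<times> D" by blast
  moreover have "(c, t) = (c', t')"
    if "c \<in> C s" "t \<in> coset_stabilizer s" "c' \<in> C s" "t' \<in> coset_stabilizer s"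
      and "pair (c, t) = pair (c', t')" for c t c' t'
  proof -
    have "c \<in> carrier G" "t \<in> carrier G" "c' \<in> carrier G" "t' \<in> carrier G" "c1 \<in> carrier G"
      using that c1 C_carrier[OF s] by (auto simp: coset_stabilizer_def)
    then show ?thesis using that(5) carrier by (simp add: pair_def m_assoc)
  qed
  then have "inj_on pair (C s \<times> coset_stabilizer s)" by (intro inj_onI) auto
  ultimately have "|C s \<times> coset_stabilizer s| \<le>o |D \<times> D|"
    using card_of_ordLeq[of "C s \<times> coset_stabilizer s" "D \<times> D"] by blast
  have "|H| \<le>o |C s <#> coset_stabilizer s|"
    using subgroup_subset_set_mult_coset_stabilizer[OF s] by (rule card_of_mono1)
  also have "|C s <#> coset_stabilizer s| \<le>o |C s \<times> coset_stabilizer s|"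
    by (rule card_of_set_mult_ordLeq)
  also note \<open>|C s \<times> coset_stabilizer s| \<le>o |D \<times> D|\<close>
  finally show ?thesis .
qed

lemma card_of_l_coset_Int_set_mult_transversal:
  assumes "infinite K" and "|K| \<le>o |H|" and "g \<in> carrier G"
  shows "|K| \<le>o |(g <# H) \<inter> (H <#> transversal)|"
proof -
  have "double_coset H g \<in> double_coset H ` S"
    using double_coset_image assms(3) by simp
  then obtain s where s: "s \<in> S" and "double_coset H g = double_coset H s" by auto
  then have "g \<in> double_coset H s"
    using assms(3) mem_double_coset_self[OF subgroup_axioms] by metis
  then obtain h0 where h0: "h0 \<in> H" and g: "g <# H = (h0 \<otimes> s) <# H"
    using s S_subset l_coset_if_mem_double_coset[OF subgroup_axioms] by blast
  define D where "D = (g <# H) \<inter> (H <#> transversal)"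
  have "|K| \<le>o |D \<times> D|"
    using assms(2) card_of_subgroup_ordLeq_Times_l_coset_Int[OF s h0]
    unfolding D_def g by (rule ordLeq_transitive)
  then have "\<not> |D| <o |K|"
    using card_of_Times_ordLess_infinite[OF assms(1)] not_ordLess_ordLeq by blast
  then show ?thesis
    unfolding D_def by (simp add: not_ordLess_iff_ordLeq[OF card_of_Well_order card_of_Well_order])
qed


lemma spreading_transversal_transversal:
  assumes "infinite K" and "|K| \<le>o |H|"
  shows "spreading_transversal H K transversal"
  unfolding spreading_transversal_def
  using transversal_subset inj_on_l_coset_transversal card_of_l_coset_Int_set_mult_transversal[OF assms]
  by blast

end

context group
begin

lemma exists_spreading_transversal:
  assumes "subgroup H G" and "infinite K" and "|K| \<le>o |H|"
  shows "\<exists>B. spreading_transversal H K B"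
proof -
  obtain S where S: "S \<subseteq> carrier G" "inj_on (double_coset H) S"
    "double_coset H ` S = double_coset H ` carrier G"
    using exists_subset_inj_on_same_image[of "carrier G" "double_coset H"] by blast
  have "\<forall>s. \<exists>C \<subseteq> H. inj_on (\<lambda>c. (c \<otimes> s) <# H) C \<and>
      (\<lambda>c. (c \<otimes> s) <# H) ` C = (\<lambda>h. (h \<otimes> s) <# H) ` H"
    using exists_subset_inj_on_same_image[of H] by blast
  then obtain C where C: "\<forall>s. C s \<subseteq> H \<and> inj_on (\<lambda>c. (c \<otimes> s) <# H) (C s) \<and>
      (\<lambda>c. (c \<otimes> s) <# H) ` C s = (\<lambda>h. (h \<otimes> s) <# H) ` H"
    by (auto dest: choice)
  interpret coset_representatives H G S C
    using assms(1) S C is_group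
    by (simp add: coset_representatives_def coset_representatives_axioms_def)
  show ?thesis using spreading_transversal_transversal[OF assms(2,3)] by blast
qed

lemma Image_entourage_I:
  assumes "I \<subseteq> carrier G" and "A \<subseteq> carrier G"
  shows "entourage_I G I `` A = insert \<one> I <#> A"
proof
  show "entourage_I G I `` A \<subseteq> insert \<one> I <#> A"
  proof
    fix y assume "y \<in> entourage_I G I `` A"
    then obtain x where "x \<in> A" and "y = \<one> \<otimes> x \<or> (\<exists>i\<in>I. y = i \<otimes> x)"
      using assms(2) unfolding entourage_I_def by auto
    then show "y \<in> insert \<one> I <#> A" unfolding set_mult_def by blast
  qed
  show "insert \<one> I <#> A \<subseteq> entourage_I G I `` A"
  proof
    fix y assume "y \<in> insert \<one> I <#> A"
    then obtain i x where "i \<in> insert \<one> I" and "x \<in> A" and "y = i \<otimes> x"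
      unfolding set_mult_def by blast
    then have "(x, y) \<in> entourage_I G I" using assms unfolding entourage_I_def by auto
    then show "y \<in> entourage_I G I `` A" using \<open>x \<in> A\<close> by blast
  qed
qed

lemma entourage_I_in_small_ent:
  assumes "I \<subseteq> carrier G" and "|I| <o |K|"
  shows "entourage_I G I \<in> small_ent G K"
  using assms unfolding small_ent_def by blast

lemma card_of_insert_ordLess_infinite:
  assumes "infinite C" and "|A| <o |C|"
  shows "|insert a A| <o |C|"
  using card_of_Un_ordLess_infinite[OF assms(1) finite_ordLess_infinite_card_of[of "{a}"] assms(2)]
    assms(1) by simp

lemma bounded_in_small_ent_iff:
  assumes "infinite K"
  shows "bounded_in (carrier G) (small_ent G K) B \<longleftrightarrow> B \<subseteq> carrier G \<and> |B| <o |K|"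
proof
  assume "bounded_in (carrier G) (small_ent G K) B"
  then obtain I x where I: "I \<subseteq> carrier G" "|I| <o |K|" and x: "x \<in> carrier G"
    and B: "B \<subseteq> entourage_I G I `` {x}"
    unfolding bounded_in_def small_ent_def by blast
  then have B: "B \<subseteq> insert \<one> I <#> {x}" by (simp add: Image_entourage_I)
  have "|insert \<one> I <#> {x}| \<le>o |insert \<one> I \<times> {x}|" by (rule card_of_set_mult_ordLeq)
  also have "|insert \<one> I \<times> {x}| <o |K|"
    using card_of_insert_ordLess_infinite[OF assms I(2)] finite_ordLess_infinite_card_of[OF _ assms]
    by (intro card_of_Times_ordLess_infinite[OF assms]) blast+
  finally show "B \<subseteq> carrier G \<and> |B| <o |K|"
    using B I x card_of_mono1[OF B] setmult_subset_G[of "insert \<one> I" "{x}"]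
    by (auto intro: ordLeq_ordLess_trans)
next
  assume B: "B \<subseteq> carrier G \<and> |B| <o |K|"
  then have "B \<subseteq> entourage_I G B `` {\<one>}"
    unfolding entourage_I_def by (auto, metis r_one subsetD)
  then show "bounded_in (carrier G) (small_ent G K) B"
    unfolding bounded_in_def using B entourage_I_in_small_ent by blast
qed

lemma asymp_disjoint_small_entI:
  assumes "infinite K" and "A \<subseteq> carrier G" and "B \<subseteq> carrier G"
    and "\<And>J. J \<subseteq> carrier G \<Longrightarrow> |J| <o |K| \<Longrightarrow> |(J <#> A) \<inter> (J <#> B)| <o |K|"
  shows "asymp_disjoint (carrier G) (small_ent G K) A B"
  unfolding asymp_disjoint_def
proof
  fix E assume "E \<in> small_ent G K"
  then obtain I where E: "E = entourage_I G I" and I: "I \<subseteq> carrier G" "|I| <o |K|"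
    unfolding small_ent_def by blast
  have J: "insert \<one> I \<subseteq> carrier G" "|insert \<one> I| <o |K|"
    using I(1) card_of_insert_ordLess_infinite[OF assms(1) I(2)] by simp_all
  have "E `` A \<inter> E `` B = (insert \<one> I <#> A) \<inter> (insert \<one> I <#> B)"
    unfolding E Image_entourage_I[OF I(1) assms(2)] Image_entourage_I[OF I(1) assms(3)] ..
  moreover have "insert \<one> I <#> A \<subseteq> carrier G"
    using J(1) assms(2) by (rule setmult_subset_G)
  ultimately have "E `` A \<inter> E `` B \<subseteq> carrier G \<and> |E `` A \<inter> E `` B| <o |K|"
    using assms(4)[OF J] by auto
  then show "bounded_in (carrier G) (small_ent G K) (E `` A \<inter> E `` B)"
    by (simp only: bounded_in_small_ent_iff[OF assms(1)])
qed

lemma card_of_l_coset_diff_ordLess_if_asymp_nbhd: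
  assumes "infinite K" and "asymp_nbhd (carrier G) (small_ent G K) U A"
    and "A \<subseteq> carrier G" and "g \<in> carrier G"
  shows "|(g <# A) - U| <o |K|"
proof -
  have "|{g}| <o |K|" using assms(1) by (simp add: finite_ordLess_infinite_card_of)
  then have "entourage_I G {g} \<in> small_ent G K"
    using assms(4) by (simp add: entourage_I_in_small_ent)
  then have "bounded_in (carrier G) (small_ent G K) (entourage_I G {g} `` A - U)"
    using assms(2) unfolding asymp_nbhd_def by blast
  then have "|entourage_I G {g} `` A - U| <o |K|"
    unfolding bounded_in_small_ent_iff[OF assms(1)] by blast
  moreover have "entourage_I G {g} `` A = insert \<one> {g} <#> A"
    using assms(3,4) by (simp add: Image_entourage_I)
  then have "g <# A \<subseteq> entourage_I G {g} `` A"
    unfolding l_coset_eq_set_mult by (simp add: mono_set_mult)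
  then have "|(g <# A) - U| \<le>o |entourage_I G {g} `` A - U|"
    by (intro card_of_mono1) blast
  ultimately show ?thesis by (rule ordLeq_ordLess_trans[rotated])
qed

lemma card_of_set_mult_Int_ordLess_if_inj_on_l_coset:
  assumes "subgroup H G" and "infinite K" and "J \<subseteq> carrier G" and "|J| <o |K|"
    and "B \<subseteq> carrier G" and "inj_on (\<lambda>b. b <# H) B"
  shows "|(J <#> H) \<inter> (J <#> B)| <o |K|"
proof -
  have unique: "y' = y"
    if yy': "y \<in> (i <# H) \<inter> (j <# B)" "y' \<in> (i <# H) \<inter> (j <# B)" and ij: "i \<in> J" "j \<in> J"
    for i j y y'
  proof -
    obtain x x' b b' where x: "x \<in> H" "x' \<in> H" and b: "b \<in> B" "b' \<in> B"
      and y: "y = i \<otimes> x" "y' = i \<otimes> x'" "y = j \<otimes> b" "y' = j \<otimes> b'"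
      using yy' unfolding l_coset_def by blast
    have carrier: "i \<in> carrier G" "j \<in> carrier G" "x \<in> carrier G" "x' \<in> carrier G"
      "b \<in> carrier G" "b' \<in> carrier G"
      using ij x b assms(3,5) subgroup.mem_carrier[OF assms(1)] by auto
    have "inv b \<otimes> b' = inv y \<otimes> y'"
      unfolding y(3,4) using carrier by (simp add: inv_mult_cancel_left)
    also have "\<dots> = inv x \<otimes> x'"
      unfolding y(1,2) using carrier by (simp add: inv_mult_cancel_left)
    finally have "b <# H = b' <# H"
      using x carrier assms(1)
      by (simp add: l_coset_eq_iff subgroup.m_closed subgroup.m_inv_closed)
    then have "b = b'" using assms(6) b by (auto dest: inj_onD)
    then show "y' = y" using y by simp
  qed
  define pick where "pick = (\<lambda>(i, j). SOME y. y \<in> (i <# H) \<inter> (j <# B))"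
  have "(J <#> H) \<inter> (J <#> B) \<subseteq> pick ` (J \<times> J)"
  proof
    fix y assume "y \<in> (J <#> H) \<inter> (J <#> B)"
    then obtain i j where ij: "i \<in> J" "j \<in> J" and y: "y \<in> (i <# H) \<inter> (j <# B)"
      unfolding set_mult_def l_coset_def by blast
    have "pick (i, j) = y"
      unfolding pick_def prod.case using y by (rule some_equality) (rule unique[OF y _ ij])
    then show "y \<in> pick ` (J \<times> J)" using ij by (intro rev_image_eqI[of "(i, j)"]) auto
  qed
  then have "|(J <#> H) \<inter> (J <#> B)| \<le>o |pick ` (J \<times> J)|" by (rule card_of_mono1)
  also have "|pick ` (J \<times> J)| \<le>o |J \<times> J|" by (rule card_of_image)
  also have "|J \<times> J| <o |K|" using assms(2,4) by (intro card_of_Times_ordLess_infinite)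
  finally show ?thesis .
qed

lemma asymp_disjoint_subgroup_if_inj_on_l_coset:
  assumes "subgroup H G" and "infinite K" and "B \<subseteq> carrier G" and "inj_on (\<lambda>b. b <# H) B"
  shows "asymp_disjoint (carrier G) (small_ent G K) H B"
  using assms(2) subgroup.subset[OF assms(1)] assms(3)
proof (rule asymp_disjoint_small_entI)
  fix J assume "J \<subseteq> carrier G" and "|J| <o |K|"
  then show "|(J <#> H) \<inter> (J <#> B)| <o |K|"
    by (rule card_of_set_mult_Int_ordLess_if_inj_on_l_coset[OF assms(1,2) _ _ assms(3,4)])
qed

lemma carrier_subset_set_mult_if_asymp_nbhds:
  assumes "infinite K" and "subgroup H G" and "spreading_transversal H K B"
    and "U \<inter> V = {}" and U: "asymp_nbhd (carrier G) (small_ent G K) U H"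
  shows "carrier G \<subseteq> (\<Union>h\<in>H. (h <# B) - V) <#> H"
proof
  fix g assume g: "g \<in> carrier G"
  have H: "H \<subseteq> carrier G" using assms(2) by (rule subgroup.subset)
  have "\<not> (g <# H) \<inter> (H <#> B) \<subseteq> (g <# H) - U"
  proof
    assume "(g <# H) \<inter> (H <#> B) \<subseteq> (g <# H) - U"
    moreover have "|K| \<le>o |(g <# H) \<inter> (H <#> B)|"
      using assms(3) g unfolding spreading_transversal_def by blast
    ultimately have "|K| \<le>o |(g <# H) - U|" using card_of_mono1 ordLeq_transitive by blast
    moreover have "|(g <# H) - U| <o |K|"
      using card_of_l_coset_diff_ordLess_if_asymp_nbhd[OF assms(1) U H g] .
    ultimately show False using not_ordLess_ordLeq by blast
  qed
  then obtain y where "y \<in> g <# H" and "y \<in> H <#> B" and "y \<in> U" by blast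
  then obtain h b where "h \<in> H" "b \<in> B" "y = h \<otimes> b" unfolding set_mult_def by blast
  then have "y \<in> (\<Union>h\<in>H. (h <# B) - V)"
    using \<open>y \<in> U\<close> assms(4) unfolding l_coset_def by blast
  moreover have "g \<in> y <# H" using l_coset_swap[OF \<open>y \<in> g <# H\<close> g assms(2)] .
  ultimately show "g \<in> (\<Union>h\<in>H. (h <# B) - V) <#> H" unfolding set_mult_def l_coset_def by blast
qed

lemma not_normal_ballean_small_ent_if_spreading_transversal:
  assumes "infinite K" and "|K| <o |carrier G|"
    and "subgroup H G" and "|H| \<le>o |K|" and "spreading_transversal H K B"
  shows "\<not> normal_ballean (carrier G) (small_ent G K)"
proof
  assume normal: "normal_ballean (carrier G) (small_ent G K)"
  have B: "B \<subseteq> carrier G" "inj_on (\<lambda>b. b <# H) B"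
    using assms(5) unfolding spreading_transversal_def by blast+
  have H: "H \<subseteq> carrier G" using assms(3) by (rule subgroup.subset)
  have "asymp_disjoint (carrier G) (small_ent G K) H B"
    using assms(3,1) B by (rule asymp_disjoint_subgroup_if_inj_on_l_coset)
  then obtain U V where "U \<inter> V = {}"
    and U: "asymp_nbhd (carrier G) (small_ent G K) U H"
    and V: "asymp_nbhd (carrier G) (small_ent G K) V B"
    using normal[unfolded normal_ballean_def, rule_format, OF H B(1)] by blast
  define W where "W = (\<Union>h\<in>H. (h <# B) - V)"
  have "|W| \<le>o |K|"
    unfolding W_def
  proof (rule card_of_UNION_ordLeq_infinite[OF assms(1,4)], rule ballI)
    fix h assume "h \<in> H"
    then have "|(h <# B) - V| <o |K|"
      using card_of_l_coset_diff_ordLess_if_asymp_nbhd[OF assms(1) V B(1)] H by blast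
    then show "|(h <# B) - V| \<le>o |K|" by (rule ordLess_imp_ordLeq)
  qed
  have "|carrier G| \<le>o |W <#> H|"
    unfolding W_def using carrier_subset_set_mult_if_asymp_nbhds[OF assms(1,3,5) \<open>U \<inter> V = {}\<close> U]
    by (rule card_of_mono1)
  also have "|W <#> H| \<le>o |W \<times> H|" by (rule card_of_set_mult_ordLeq)
  also have "|W \<times> H| \<le>o |K|"
    using assms(1) \<open>|W| \<le>o |K|\<close> assms(4) by (rule card_of_Times_ordLeq_infinite)
  finally show False using not_ordLess_ordLeq[OF assms(2)] by contradiction
qed

end

theorem theorem1p17:
  fixes G :: "('a, 'b) monoid_scheme" and K :: "'k set"
  assumes "group G"
    and "infinite K"
    and "(card_of K, card_of (carrier G)) \<in> ordLess"
  shows "\<not> normal_ballean (carrier G) (small_ent G K)"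
proof -
  interpret group G by fact
  have "|K| \<le>o |carrier G|" using assms(3) by (rule ordLess_imp_ordLeq)
  then obtain f where f: "inj_on f K" "f ` K \<subseteq> carrier G"
    unfolding card_of_ordLeq[symmetric] by blast
  have "infinite (f ` K)" using assms(2) f(1) finite_imageD by blast
  then obtain H where H: "subgroup H G" "f ` K \<subseteq> H" "|H| \<le>o |f ` K|"
    using exists_subgroup_card_of_ordLeq[OF _ f(2)] by blast
  have "|H| \<le>o |K|" using H(3) card_of_image by (rule ordLeq_transitive)
  have "|K| \<le>o |H|" unfolding card_of_ordLeq[symmetric] using f(1) H(2) by (intro exI[of _ f]) simp
  then obtain B where "spreading_transversal H K B"
    using exists_spreading_transversal[OF H(1) assms(2)] by blast
  then show ?thesis
    using not_normal_ballean_small_ent_if_spreading_transversal[OF assms(2,3) H(1)] \<open>|H| \<le>o |K|\<close>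
    by blast
qed

end
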